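(* Consider the randomized gossip model described in the context and assume A1, A2 and A3. Assume that either $T_{k+1}\le T_k$ for all $k$, or $T_{k+1}\ge T_k$ for all $k$. Then: (i) if $\sum_{k=0}^\infty T_k(1-T_k)<\infty$, there is $K_0$ such that for all initial times $k_0\ge K_0$ and Lebesgue-almost every initial value $x(k_0)\in\mathbb R^n$, $\mathbf P(\limsup_{k\to\infty}\mathcal H(k)=0)=0$; (ii) if $\sum_{k=0}^\infty T_k(1-T_k)=\infty$, then $\mathbf P(\limsup_{k\to\infty}\mathcal H(k)=0)=1$ for all initial conditions.
   Context: Network with node set $\mathcal V=\{1,\dots,n\}$, $n\ge 3$. Let $A=[a_{ij}]$ be an $n\times n$ stochastic matrix; the underlying digraph $\mathcal G_0$ has an arc $(j,i)$ iff $a_{ij}>0$. At each time $k=0,1,2,\dots$, independently of the past and of node states, a node $i$ is drawn with probability $1/n$ and then the pair $(i,j)$ is selected with probability $a_{ij}$. Given that pair $(i,j)$ is selected at time $k$, independently of time, node states and pair selection, node $i$: with probability $\alpha$ (event $\mathscr A_{ij}(k)$) sets $x_i(k+1)=(1-T_k)x_i(k)+T_kx_j(k)$, $0<T_k\le1$; with probability $\beta$ (event $\mathscr N_{ij}(k)$) keeps $x_i(k+1)=x_i(k)$; with probability $\gamma$ (event $\mathscr R_{ij}(k)$) sets $x_i(k+1)=(1+S_k)x_i(k)-S_kx_j(k)$, $S_k>0$; $\alpha+\beta+\gamma=1$. Node $j$ updates analogously according to events $\mathscr A_{ji}(k),\mathscr N_{ji}(k),\mathscr R_{ji}(k)$;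 other nodes keep their states. Start at time $k_0\ge0$ from $x(k_0)\in\mathbb R^n$. $\mathcal H(k)=\max_i x_i(k)-\min_i x_i(k)$. A1: $\mathcal G_0$ is weakly connected. A2: $\mathscr R_{ij}(k)$ has probability zero for all $(i,j)$, $k$. A3: $\mathscr A_{ij}(k)=\mathscr A_{ji}(k)$ for all $(i,j)$, $k$. *)

theory Defs
  imports "HOL-Probability.Probability"
begin

datatype act = Att | Neu | Rep

text \<open>Weak connectivity of the digraph with arc (j,i) iff a i j > 0: the underlying
  undirected graph (symmetrised arc relation) is connected.\<close>
definition weakly_connected :: "('n::finite \<Rightarrow> 'n \<Rightarrow> real) \<Rightarrow> bool" where
  "weakly_connected A \<longleftrightarrow>
     (\<forall>i j. (i, j) \<in> {(u, v). A u v > 0 \<or> A v u > 0}\<^sup>*)"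

fun node_upd :: "act \<Rightarrow> real \<Rightarrow> real \<Rightarrow> real \<Rightarrow> real \<Rightarrow> real" where
  "node_upd Att t s xs xo = (1 - t) * xs + t * xo"
| "node_upd Neu t s xs xo = xs"
| "node_upd Rep t s xs xo = (1 + s) * xs - s * xo"

definition gossip_step ::
  "real \<Rightarrow> real \<Rightarrow> (('n::finite \<times> 'n) \<times> (act \<times> act)) \<Rightarrow> real^'n \<Rightarrow> real^'n" where
  "gossip_step t s c x = (case c of ((i, j), (ei, ej)) \<Rightarrow>
     (\<chi> l. if l = i then node_upd ei t s (x$i) (x$j)
           else if l = j then node_upd ej t s (x$j) (x$i)
           else x$l))"

fun traj :: "(nat \<Rightarrow> real) \<Rightarrow> (nat \<Rightarrow> real) \<Rightarrow> nat \<Rightarrow> real^'n \<Rightarrow>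
             (('n::finite \<times> 'n) \<times> (act \<times> act)) stream \<Rightarrow> nat \<Rightarrow> real^'n" where
  "traj T S k0 x0 \<omega> 0 = x0"
| "traj T S k0 x0 \<omega> (Suc k) =
     (if k < k0 then x0 else gossip_step (T k) (S k) (\<omega> !! k) (traj T S k0 x0 \<omega> k))"

definition spread :: "real^'n::finite \<Rightarrow> real" where
  "spread x = Max (range (\<lambda>i. x$i)) - Min (range (\<lambda>i. x$i))"

end

theory Submission
  imports Defs
begin

text \<open>Let \<open>V = sq_dev\<close> be the sum of squared deviations from the mean. Under A2 and A3 a step either
  leaves the state unchanged or lets both selected nodes attract each other, which preserves the
  mean and lowers \<open>V\<close> by exactly \<open>2 T\<^sub>k (1 - T\<^sub>k) (x\<^sub>i - x\<^sub>j)\<^sup>2 \<le> 4 T\<^sub>k (1 - T\<^sub>k) V\<close>.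
  Hence \<open>V\<close> is nonincreasing along every path and \<open>V(k) \<ge> \<Prod>\<^sub>j (1 - 4 T\<^sub>j (1 - T\<^sub>j)) V(k\<^sub>0)\<close>.
  If \<open>\<Sum> T\<^sub>k (1 - T\<^sub>k) < \<infinity>\<close>, this product stays positive once \<open>T\<^sub>j (1 - T\<^sub>j) \<le> 1/8\<close>, so
  disagreement persists surely for every initial value off the null set \<open>V = 0\<close>.
  Conversely, averaging over the random pair turns the decrement into a Dirichlet form, which
  weak connectivity bounds below by a multiple of \<open>V\<close>; thus
  \<open>E V(k+1) \<le> (1 - b T\<^sub>k (1 - T\<^sub>k)) E V(k)\<close>, and \<open>E V(k) \<rightarrow> 0\<close> if \<open>\<Sum> T\<^sub>k (1 - T\<^sub>k) = \<infinity>\<close>.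
  By monotonicity \<open>V \<rightarrow> 0\<close> almost surely, and the spread is at most \<open>sqrt (2 V)\<close>.\<close>

instance act :: finite
proof
  have UNIV_eq: "(UNIV :: act set) = {Att, Neu, Rep}"
    by (auto intro: act.exhaust)
  show "finite (UNIV :: act set)"
    unfolding UNIV_eq by simp
qed

section \<open>Squared deviation from the mean\<close>

definition mean :: "real^'n::finite \<Rightarrow> real" where
  "mean x = (\<Sum>l\<in>UNIV. x$l) / real CARD('n)"

definition sq_dev :: "real^'n::finite \<Rightarrow> real" where
  "sq_dev x = (\<Sum>l\<in>UNIV. (x$l - mean x)^2)"

lemma sum_sq_diff_eq_sq_dev:
  fixes x :: "real^'n::finite"
  shows "(\<Sum>l\<in>UNIV. (x$l - c)^2) = sq_dev x + real CARD('n) * (mean x - c)^2"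
proof -
  have centred: "(\<Sum>l\<in>UNIV. x$l - mean x) = 0"
    by (simp add: sum_subtractf mean_def)
  have "(\<Sum>l\<in>UNIV. (x$l - c)^2)
      = (\<Sum>l\<in>UNIV. (x$l - mean x)^2 + 2 * (mean x - c) * (x$l - mean x) + (mean x - c)^2)"
    by (rule sum.cong) (simp_all add: power2_eq_square algebra_simps)
  also have "\<dots> = sq_dev x + 2 * (mean x - c) * (\<Sum>l\<in>UNIV. x$l - mean x)
                    + real CARD('n) * (mean x - c)^2"
    by (simp add: sq_dev_def sum.distrib sum_distrib_left)
  finally show ?thesis
    using centred by simp
qed

lemma sq_dev_le_sum_sq_diff: "sq_dev (x::real^'n::finite) \<le> (\<Sum>l\<in>UNIV. (x$l - c)^2)"
  using sum_sq_diff_eq_sq_dev[of x c] by simp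

lemma sq_dev_eq_sum_sq:
  fixes x :: "real^'n::finite"
  shows "sq_dev x = (\<Sum>l\<in>UNIV. (x$l)^2) - real CARD('n) * (mean x)^2"
  using sum_sq_diff_eq_sq_dev[of x 0] by simp

lemma sq_dev_nonneg: "0 \<le> sq_dev (x::real^'n::finite)"
  unfolding sq_dev_def by (simp add: sum_nonneg)

lemma diff_sq_le_sq_dev: "(x$a - x$b)^2 \<le> 2 * sq_dev (x::real^'n::finite)"
proof (cases "a = b")
  case True
  then show ?thesis
    using sq_dev_nonneg[of x] by simp
next
  case False
  let ?m = "mean x"
  have "(x$a - x$b)^2 \<le> 2 * ((x$a - ?m)^2 + (x$b - ?m)^2)"
    using zero_le_power2[of "x$a + x$b - 2 * ?m"] by (simp add: power2_eq_square algebra_simps)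
  also have "(x$a - ?m)^2 + (x$b - ?m)^2 = (\<Sum>l\<in>{a, b}. (x$l - ?m)^2)"
    using False by simp
  also have "\<dots> \<le> sq_dev x"
    unfolding sq_dev_def by (rule sum_mono2) auto
  finally show ?thesis
    by simp
qed

lemma spread_eq_diff:
  fixes x :: "real^'n::finite"
  obtains a b where "spread x = x$a - x$b"
proof -
  have "Max (range (\<lambda>i. x$i)) \<in> range (\<lambda>i. x$i)" "Min (range (\<lambda>i. x$i)) \<in> range (\<lambda>i. x$i)"
    by (simp_all add: Max_in Min_in)
  then obtain a b where "Max (range (\<lambda>i. x$i)) = x$a" "Min (range (\<lambda>i. x$i)) = x$b"
    by blast
  then show ?thesis
    using that unfolding spread_def by simp
qed

lemma spread_nonneg: "0 \<le> spread (x::real^'n::finite)"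
proof -
  have "Min (range (\<lambda>i. x$i)) \<le> x$i" "x$i \<le> Max (range (\<lambda>i. x$i))" for i
    by simp_all
  then show ?thesis
    unfolding spread_def by (meson diff_ge_0_iff_ge order_trans)
qed

lemma spread_sq_le_sq_dev: "(spread x)^2 \<le> 2 * sq_dev (x::real^'n::finite)"
  by (metis spread_eq_diff diff_sq_le_sq_dev)

lemma sq_dev_le_spread_sq: "sq_dev (x::real^'n::finite) \<le> real CARD('n) * (spread x)^2"
proof -
  let ?min = "Min (range (\<lambda>i. x$i))"
  have "sq_dev x \<le> (\<Sum>l\<in>UNIV. (x$l - ?min)^2)"
    by (rule sq_dev_le_sum_sq_diff)
  also have "\<dots> \<le> (\<Sum>l\<in>(UNIV::'n set). (spread x)^2)"
  proof (rule sum_mono)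
    fix l :: 'n
    have "0 \<le> x$l - ?min" "x$l - ?min \<le> spread x"
      unfolding spread_def by (simp_all add: Max_ge)
    then show "(x$l - ?min)^2 \<le> (spread x)^2"
      by (simp add: power_mono)
  qed
  finally show ?thesis
    by simp
qed

section \<open>A single gossip step\<close>

lemma gossip_step_same_node: "gossip_step t s ((i, i), (e, e')) x = x"
  by (cases e) (auto simp: gossip_step_def vec_eq_iff algebra_simps)

lemma gossip_step_Neu: "gossip_step t s ((i, j), (Neu, Neu)) x = x"
  by (auto simp: gossip_step_def vec_eq_iff)

lemma sum_change_two_components:
  fixes x y :: "real^'n::finite" and f :: "real \<Rightarrow> real"
  assumes "i \<noteq> j" and "\<And>l. l \<noteq> i \<Longrightarrow> l \<noteq> j \<Longrightarrow> y$l = x$l"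
  shows "(\<Sum>l\<in>UNIV. f (y$l)) = (\<Sum>l\<in>UNIV. f (x$l)) - f (x$i) - f (x$j) + f (y$i) + f (y$j)"
proof -
  have split: "(\<Sum>l\<in>UNIV. f (z$l)) = f (z$i) + f (z$j) + (\<Sum>l\<in>UNIV-{i}-{j}. f (z$l))"
    for z :: "real^'n"
  proof -
    have "(\<Sum>l\<in>UNIV. f (z$l)) = f (z$i) + (\<Sum>l\<in>UNIV-{i}. f (z$l))"
      by (rule sum.remove) auto
    also have "(\<Sum>l\<in>UNIV-{i}. f (z$l)) = f (z$j) + (\<Sum>l\<in>UNIV-{i}-{j}. f (z$l))"
      by (rule sum.remove) (use assms(1) in auto)
    finally show ?thesis
      by simp
  qed
  have "(\<Sum>l\<in>UNIV-{i}-{j}. f (y$l)) = (\<Sum>l\<in>UNIV-{i}-{j}. f (x$l))"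
    by (rule sum.cong) (use assms(2) in auto)
  then show ?thesis
    using split[of y] split[of x] by simp
qed

lemma sq_dev_gossip_step_Att:
  fixes x :: "real^'n::finite"
  shows "sq_dev (gossip_step t s ((i, j), (Att, Att)) x) = sq_dev x - 2 * t * (1 - t) * (x$i - x$j)^2"
proof (cases "i = j")
  case True
  then show ?thesis
    by (simp add: gossip_step_same_node)
next
  case False
  define y where "y = gossip_step t s ((i, j), (Att, Att)) x"
  have yi: "y$i = (1 - t) * x$i + t * x$j" and yj: "y$j = (1 - t) * x$j + t * x$i"
    using False by (auto simp: y_def gossip_step_def)
  have others: "\<And>l. l \<noteq> i \<Longrightarrow> l \<noteq> j \<Longrightarrow> y$l = x$l"
    by (auto simp: y_def gossip_step_def)
  have "mean y = mean x"
    using sum_change_two_components[OF False others, of "\<lambda>u. u"] yi yj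
    by (simp add: mean_def algebra_simps)
  moreover have "(\<Sum>l\<in>UNIV. (y$l)^2) = (\<Sum>l\<in>UNIV. (x$l)^2) - 2 * t * (1 - t) * (x$i - x$j)^2"
    using sum_change_two_components[OF False others, of "\<lambda>u. u^2"] yi yj
    by (simp add: power2_eq_square algebra_simps)
  ultimately show ?thesis
    unfolding y_def[symmetric] sq_dev_eq_sum_sq by simp
qed

text \<open>The action pairs that remain possible under A2 and A3.\<close>

definition sym_acts :: "(act \<times> act) set" where
  "sym_acts = {(Att, Att), (Neu, Neu)}"

lemma set_pmf_subset_sym_acts:
  assumes "pmf (map_pmf fst q) Rep = 0" and "pmf (map_pmf snd q) Rep = 0"
    and "\<forall>e\<in>set_pmf q. fst e = Att \<longleftrightarrow> snd e = Att"
  shows "set_pmf q \<subseteq> sym_acts"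
proof
  fix e assume e: "e \<in> set_pmf q"
  have "Rep \<notin> set_pmf (map_pmf fst q)" "Rep \<notin> set_pmf (map_pmf snd q)"
    using assms(1,2) by (simp_all only: set_pmf_iff not_not)
  then have "fst e \<noteq> Rep" "snd e \<noteq> Rep"
    using e by (metis image_eqI set_map_pmf)+
  moreover have "fst e = Att \<longleftrightarrow> snd e = Att"
    using e assms(3) by blast
  ultimately show "e \<in> sym_acts"
    unfolding sym_acts_def by (cases "fst e"; cases "snd e") (auto simp: prod_eq_iff)
qed

lemma sq_dev_gossip_step:
  fixes x :: "real^'n::finite"
  assumes "snd c \<in> sym_acts"
  shows "sq_dev (gossip_step t s c x) = sq_dev x
           - (if fst (snd c) = Att then 2 * t * (1 - t) * (x$fst (fst c) - x$snd (fst c))^2 else 0)"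
  using assms by (cases c) (auto simp: sym_acts_def sq_dev_gossip_step_Att gossip_step_Neu)

lemma sq_dev_gossip_step_le:
  fixes x :: "real^'n::finite"
  assumes "snd c \<in> sym_acts" "0 \<le> t" "t \<le> 1"
  shows "sq_dev (gossip_step t s c x) \<le> sq_dev x"
  using sq_dev_gossip_step[OF assms(1), of t s x] assms(2,3) by simp

lemma sq_dev_gossip_step_ge:
  fixes x :: "real^'n::finite"
  assumes "snd c \<in> sym_acts" "0 \<le> t" "t \<le> 1"
  shows "(1 - 4 * (t * (1 - t))) * sq_dev x \<le> sq_dev (gossip_step t s c x)"
proof -
  let ?D = "2 * t * (1 - t) * (x$fst (fst c) - x$snd (fst c))^2"
  have "0 \<le> ?D"
    using assms(2,3) by simp
  then have "sq_dev x - ?D \<le> sq_dev (gossip_step t s c x)"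
    using sq_dev_gossip_step[OF assms(1), of t s x] by simp
  moreover have "?D \<le> 2 * t * (1 - t) * (2 * sq_dev x)"
    by (rule mult_left_mono[OF diff_sq_le_sq_dev]) (use assms(2,3) in simp)
  ultimately show ?thesis
    by (simp add: algebra_simps)
qed

section \<open>Deterministic bounds along a trajectory\<close>

lemma traj_before_start: "k \<le> k0 \<Longrightarrow> traj T S k0 x0 \<omega> k = x0"
  by (induction k) auto

lemma sq_dev_traj_Suc_le:
  assumes "\<And>k. snd (\<omega> !! k) \<in> sym_acts" "\<And>k. 0 \<le> T k" "\<And>k. T k \<le> 1"
  shows "sq_dev (traj T S k0 x0 \<omega> (Suc k)) \<le> sq_dev (traj T S k0 x0 \<omega> k)"
  by (cases "k < k0") (simp_all add: traj_before_start sq_dev_gossip_step_le assms)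

lemma sq_dev_traj_ge_prod:
  assumes "\<And>k. snd (\<omega> !! k) \<in> sym_acts" "\<And>k. 0 \<le> T k" "\<And>k. T k \<le> 1"
  shows "(\<Prod>j\<in>{k0..<k}. 1 - 4 * (T j * (1 - T j))) * sq_dev x0 \<le> sq_dev (traj T S k0 x0 \<omega> k)"
proof (induction k)
  case 0
  then show ?case
    by simp
next
  case (Suc k)
  show ?case
  proof (cases "k < k0")
    case True
    then show ?thesis
      by (simp add: traj_before_start)
  next
    case False
    have "1 - 4 * (T k * (1 - T k)) = (1 - 2 * T k)^2"
      by (simp add: power2_eq_square algebra_simps)
    then have factor_nonneg: "0 \<le> 1 - 4 * (T k * (1 - T k))"
      by simp
    have "(\<Prod>j\<in>{k0..<Suc k}. 1 - 4 * (T j * (1 - T j))) * sq_dev x0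
        = (1 - 4 * (T k * (1 - T k))) * ((\<Prod>j\<in>{k0..<k}. 1 - 4 * (T j * (1 - T j))) * sq_dev x0)"
      using False by (simp add: prod.atLeastLessThan_Suc)
    also have "\<dots> \<le> (1 - 4 * (T k * (1 - T k))) * sq_dev (traj T S k0 x0 \<omega> k)"
      by (rule mult_left_mono[OF Suc factor_nonneg])
    also have "\<dots> \<le> sq_dev (traj T S k0 x0 \<omega> (Suc k))"
      using False by (simp add: sq_dev_gossip_step_ge assms)
    finally show ?thesis .
  qed
qed

lemma exp_le_one_minus:
  fixes y :: real
  assumes "0 \<le> y" "y \<le> 1/2"
  shows "exp (-2 * y) \<le> 1 - y"
proof -
  have "-2 * y \<le> - y - 2 * y^2"
    using mult_left_mono[OF assms(2), of "4 * y"] assms(1) by (simp add: power2_eq_square)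
  also have "\<dots> \<le> ln (1 - y)"
    by (rule ln_one_minus_pos_lower_bound[OF assms])
  finally show ?thesis
    using assms by (simp add: ln_ge_iff)
qed

lemma exp_le_prod_one_minus:
  fixes y :: "'a \<Rightarrow> real"
  assumes "finite I" "\<And>j. j \<in> I \<Longrightarrow> 0 \<le> y j" "\<And>j. j \<in> I \<Longrightarrow> y j \<le> 1/2"
  shows "exp (-2 * (\<Sum>j\<in>I. y j)) \<le> (\<Prod>j\<in>I. 1 - y j)"
proof -
  have "exp (-2 * (\<Sum>j\<in>I. y j)) = (\<Prod>j\<in>I. exp (-2 * y j))"
    using assms(1) by (simp add: sum_distrib_left exp_sum)
  also have "\<dots> \<le> (\<Prod>j\<in>I. 1 - y j)"
    by (rule prod_mono) (use assms exp_le_one_minus in auto)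
  finally show ?thesis .
qed

lemma prod_one_minus_le_exp:
  fixes y :: "'a \<Rightarrow> real"
  assumes "finite I" "\<And>j. j \<in> I \<Longrightarrow> 0 \<le> y j" "\<And>j. j \<in> I \<Longrightarrow> y j \<le> 1"
  shows "(\<Prod>j\<in>I. 1 - y j) \<le> exp (- (\<Sum>j\<in>I. y j))"
proof -
  have "(\<Prod>j\<in>I. 1 - y j) \<le> (\<Prod>j\<in>I. exp (- y j))"
    by (rule prod_mono) (use assms in \<open>auto intro: order_trans[OF _ exp_ge_add_one_self]\<close>)
  also have "\<dots> = exp (- (\<Sum>j\<in>I. y j))"
    using assms(1) by (simp add: exp_sum sum_negf[symmetric])
  finally show ?thesis .
qed

lemma prod_one_minus_LIMSEQ_0:
  fixes y :: "nat \<Rightarrow> real"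
  assumes "\<And>k. 0 \<le> y k" "\<And>k. y k \<le> 1" "\<not> summable y"
  shows "(\<lambda>k. \<Prod>j<k. 1 - y j) \<longlonglongrightarrow> 0"
proof (rule tendsto_sandwich[where f = "\<lambda>_. 0" and h = "\<lambda>k. exp (- (\<Sum>j<k. y j))"])
  have "filterlim (\<lambda>k. \<Sum>j<k. y j) at_top sequentially"
    unfolding filterlim_at_top eventually_sequentially
  proof
    fix B :: real
    obtain N where N: "B \<le> (\<Sum>j<N. y j)"
      using summableI_nonneg_bounded[of y B] assms(1,3) by (meson linorder_le_cases)
    have "\<forall>n\<ge>N. (\<Sum>j<N. y j) \<le> (\<Sum>j<n. y j)"
      using assms(1) by (auto intro: sum_mono2)
    then show "\<exists>N. \<forall>n\<ge>N. B \<le> (\<Sum>j<n. y j)"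
      using N by (meson order_trans)
  qed
  then show "(\<lambda>k. exp (- (\<Sum>j<k. y j))) \<longlonglongrightarrow> 0"
    by (intro filterlim_compose[OF exp_at_bot] filterlim_compose[OF filterlim_uminus_at_bot_at_top])
  show "\<forall>\<^sub>F k in sequentially. 0 \<le> (\<Prod>j<k. 1 - y j)"
    using assms(2) by (simp add: prod_nonneg)
  show "\<forall>\<^sub>F k in sequentially. (\<Prod>j<k. 1 - y j) \<le> exp (- (\<Sum>j<k. y j))"
    using assms(1,2) by (simp add: prod_one_minus_le_exp)
qed simp

lemma limsup_spread_traj_neq_0:
  fixes x0 :: "real^'n::finite"
  assumes acts: "\<And>k. snd (\<omega> !! k) \<in> sym_acts" and T01: "\<And>k. 0 \<le> T k" "\<And>k. T k \<le> 1"
    and summable: "summable (\<lambda>k. T k * (1 - T k))"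
    and small: "\<And>j. j \<ge> k0 \<Longrightarrow> T j * (1 - T j) \<le> 1/8"
    and sq_dev_pos: "0 < sq_dev x0"
  shows "limsup (\<lambda>k. ereal (spread (traj T S k0 x0 \<omega> k))) \<noteq> 0"
proof -
  let ?a = "\<lambda>k. T k * (1 - T k)"
  have a_nonneg: "0 \<le> ?a k" for k
    using T01 by simp
  define c where "c = exp (-8 * suminf ?a) * sq_dev x0"
  have "c \<le> sq_dev (traj T S k0 x0 \<omega> k)" for k
  proof -
    have "(\<Sum>j\<in>{k0..<k}. ?a j) \<le> suminf ?a"
      by (rule sum_le_suminf[OF summable]) (auto simp: a_nonneg)
    then have "exp (-8 * suminf ?a) \<le> exp (-2 * (\<Sum>j\<in>{k0..<k}. 4 * ?a j))"
      by (simp add: sum_distrib_left[symmetric])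
    also have "\<dots> \<le> (\<Prod>j\<in>{k0..<k}. 1 - 4 * ?a j)"
      by (rule exp_le_prod_one_minus) (use small a_nonneg in \<open>auto simp: mult.commute\<close>)
    finally have "c \<le> (\<Prod>j\<in>{k0..<k}. 1 - 4 * ?a j) * sq_dev x0"
      unfolding c_def using sq_dev_pos by (simp add: mult_right_mono)
    also have "\<dots> \<le> sq_dev (traj T S k0 x0 \<omega> k)"
      by (rule sq_dev_traj_ge_prod[OF acts T01])
    finally show ?thesis .
  qed
  then have "c / real CARD('n) \<le> (spread (traj T S k0 x0 \<omega> k))^2" for k
    using sq_dev_le_spread_sq[of "traj T S k0 x0 \<omega> k"] order_trans
    by (fastforce simp: field_simps)
  then have "sqrt (c / real CARD('n)) \<le> spread (traj T S k0 x0 \<omega> k)" for k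
    using spread_nonneg real_le_lsqrt by blast
  then have "ereal (sqrt (c / real CARD('n))) \<le> limsup (\<lambda>k. ereal (spread (traj T S k0 x0 \<omega> k)))"
    by (intro le_Limsup) auto
  moreover have "0 < sqrt (c / real CARD('n))"
    using sq_dev_pos by (simp add: c_def)
  ultimately show ?thesis
    by auto
qed

lemma AE_sq_dev_pos:
  assumes "CARD('n::finite) \<ge> 2"
  shows "AE x in (lborel :: (real^'n) measure). 0 < sq_dev x"
proof -
  obtain a b :: 'n where "a \<noteq> b"
    using assms card_le_Suc0_iff_eq[of "UNIV :: 'n set"] by fastforce
  define w :: "real^'n" where "w = axis a 1 - axis b 1"
  have "w \<noteq> 0"
    using \<open>a \<noteq> b\<close> by (auto simp: w_def vec_eq_iff axis_def)
  then have "negligible {x. w \<bullet> x = 0}"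
    by (simp add: negligible_hyperplane)
  then have null: "{x. w \<bullet> x = 0} \<in> null_sets lborel"
    by (simp add: negligible_iff_null_sets null_sets_completion_iff closed_hyperplane)
  show ?thesis
  proof (rule AE_I'[OF null], safe)
    fix x :: "real^'n"
    assume "\<not> 0 < sq_dev x"
    then have "(x$a - x$b)^2 \<le> 0"
      using diff_sq_le_sq_dev[of x a b] sq_dev_nonneg[of x] by simp
    then show "w \<bullet> x = 0"
      by (simp add: w_def inner_diff_left inner_axis')
  qed
qed

section \<open>Weak connectivity and the Dirichlet form\<close>

definition dirichlet_form :: "('n::finite \<Rightarrow> 'n \<Rightarrow> real) \<Rightarrow> real^'n \<Rightarrow> real" where
  "dirichlet_form A x = (\<Sum>i\<in>UNIV. \<Sum>j\<in>UNIV. A i j * (x$i - x$j)^2)"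

lemma dirichlet_form_nonneg: "(\<And>i j. 0 \<le> A i j) \<Longrightarrow> 0 \<le> dirichlet_form A x"
  unfolding dirichlet_form_def by (intro sum_nonneg) simp

lemma weighted_diff_sq_le_dirichlet_form:
  assumes "\<And>i j. 0 \<le> A i j"
  shows "A u v * (x$u - x$v)^2 \<le> dirichlet_form A x"
proof -
  have "A u v * (x$u - x$v)^2 \<le> (\<Sum>j\<in>UNIV. A u j * (x$u - x$j)^2)"
    by (rule member_le_sum) (use assms in auto)
  also have "\<dots> \<le> dirichlet_form A x"
    unfolding dirichlet_form_def by (rule member_le_sum) (use assms in \<open>auto intro!: sum_nonneg\<close>)
  finally show ?thesis .
qed

lemma edge_diff_le_dirichlet_form:
  assumes "\<And>i j. 0 \<le> A i j" and "0 < A u v + A v u"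
  shows "\<bar>x$u - x$v\<bar> \<le> sqrt (2 / (A u v + A v u)) * sqrt (dirichlet_form A x)"
proof -
  have "(A u v + A v u) * (x$u - x$v)^2 \<le> 2 * dirichlet_form A x"
    using weighted_diff_sq_le_dirichlet_form[of A u v x, OF assms(1)]
      weighted_diff_sq_le_dirichlet_form[of A v u x, OF assms(1)]
    by (simp add: power2_commute[of "x$v"] algebra_simps)
  then have "(x$u - x$v)^2 \<le> 2 / (A u v + A v u) * dirichlet_form A x"
    using assms(2) by (simp add: field_simps mult.commute)
  then show ?thesis
    by (metis real_sqrt_abs real_sqrt_le_mono real_sqrt_mult)
qed

lemma path_diff_le_dirichlet_form:
  assumes nonneg: "\<And>i j. 0 \<le> A i j"
    and path: "(i, j) \<in> {(u, v). A u v > 0 \<or> A v u > 0}\<^sup>*"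
  shows "\<exists>C\<ge>0. \<forall>x. \<bar>x$i - x$j\<bar> \<le> C * sqrt (dirichlet_form A x)"
  using path
proof (induction rule: rtrancl_induct)
  case base
  show ?case
    by (intro exI[of _ 0]) auto
next
  case (step y z)
  obtain C where C: "C \<ge> 0" "\<forall>x. \<bar>x$i - x$y\<bar> \<le> C * sqrt (dirichlet_form A x)"
    using step.IH by blast
  let ?C' = "sqrt (2 / (A y z + A z y))"
  have pos: "0 < A y z + A z y"
    using step.hyps(2) nonneg[of y z] nonneg[of z y] by auto
  then have edge: "\<bar>x$y - x$z\<bar> \<le> ?C' * sqrt (dirichlet_form A x)" for x
    by (rule edge_diff_le_dirichlet_form[of A, OF nonneg])
  then have "\<bar>x$i - x$z\<bar> \<le> (C + ?C') * sqrt (dirichlet_form A x)" for x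
  proof -
    have "\<bar>x$i - x$z\<bar> \<le> \<bar>x$i - x$y\<bar> + \<bar>x$y - x$z\<bar>"
      using abs_triangle_ineq[of "x$i - x$y" "x$y - x$z"] by simp
    also have "\<dots> \<le> C * sqrt (dirichlet_form A x) + ?C' * sqrt (dirichlet_form A x)"
      using C(2) edge[of x] by (intro add_mono) auto
    finally show ?thesis
      by (simp add: distrib_right)
  qed
  then show ?case
    using C(1) pos by (intro exI[of _ "C + ?C'"]) auto
qed

lemma weakly_connected_diff_le_dirichlet_form:
  fixes A :: "'n::finite \<Rightarrow> 'n \<Rightarrow> real"
  assumes nonneg: "\<And>i j. 0 \<le> A i j" and "weakly_connected A"
  obtains C where "\<And>x i j. \<bar>x$i - x$j\<bar> \<le> C * sqrt (dirichlet_form A x)"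
proof -
  have "\<forall>p::'n \<times> 'n. \<exists>C\<ge>0. \<forall>x. \<bar>x$fst p - x$snd p\<bar> \<le> C * sqrt (dirichlet_form A x)"
    using assms path_diff_le_dirichlet_form unfolding weakly_connected_def by blast
  then obtain Cp where Cp: "\<And>p. Cp p \<ge> 0"
    "\<And>p x. \<bar>x$fst p - x$snd p\<bar> \<le> Cp p * sqrt (dirichlet_form A x)"
    by metis
  have "\<bar>x$i - x$j\<bar> \<le> (\<Sum>p\<in>UNIV. Cp p) * sqrt (dirichlet_form A x)" for x i j
  proof -
    have "Cp (i, j) \<le> (\<Sum>p\<in>UNIV. Cp p)"
      by (rule member_le_sum) (simp_all add: Cp(1))
    then have "Cp (i, j) * sqrt (dirichlet_form A x) \<le> (\<Sum>p\<in>UNIV. Cp p) * sqrt (dirichlet_form A x)"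
      by (rule mult_right_mono) (simp add: dirichlet_form_nonneg nonneg)
    then show ?thesis
      using Cp(2)[where p = "(i, j)" and x = x] by simp
  qed
  then show ?thesis
    by (rule that)
qed

lemma sq_dev_le_dirichlet_form:
  fixes A :: "'n::finite \<Rightarrow> 'n \<Rightarrow> real"
  assumes nonneg: "\<And>i j. 0 \<le> A i j" and "weakly_connected A"
  obtains c where "c > 0" "\<And>x. c * sq_dev x \<le> dirichlet_form A x"
proof -
  obtain C where C: "\<And>x i j. \<bar>x$i - x$j\<bar> \<le> C * sqrt (dirichlet_form A x)"
    using weakly_connected_diff_le_dirichlet_form[OF assms] by blast
  have Q_nonneg: "0 \<le> dirichlet_form A x" for x
    by (rule dirichlet_form_nonneg) (rule nonneg)
  define c where "c = 1 / (real CARD('n) * C^2 + 1)"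
  have "c * sq_dev x \<le> dirichlet_form A x" for x
  proof -
    fix l0 :: 'n
    have "\<bar>x$l - x$l0\<bar>^2 \<le> (C * sqrt (dirichlet_form A x))^2" for l
      by (rule power_mono[OF C]) simp
    then have pointwise: "(x$l - x$l0)^2 \<le> C^2 * dirichlet_form A x" for l
      by (simp add: power_mult_distrib Q_nonneg)
    have "sq_dev x \<le> (\<Sum>l\<in>UNIV. (x$l - x$l0)^2)"
      by (rule sq_dev_le_sum_sq_diff)
    also have "\<dots> \<le> (\<Sum>l\<in>(UNIV::'n set). C^2 * dirichlet_form A x)"
      by (rule sum_mono) (rule pointwise)
    also have "\<dots> \<le> (real CARD('n) * C^2 + 1) * dirichlet_form A x"
      by (simp add: algebra_simps Q_nonneg)
    finally show ?thesis
      unfolding c_def by (simp add: field_simps add_pos_nonneg)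
  qed
  moreover have "c > 0"
    unfolding c_def by (simp add: add_nonneg_pos)
  ultimately show ?thesis
    using that by blast
qed

section \<open>Expected decrease of one step\<close>

lemma sum_UNIV_pair:
  "(\<Sum>c\<in>(UNIV::('a::finite \<times> 'b::finite) set). f c) = (\<Sum>a\<in>UNIV. \<Sum>b\<in>UNIV. f (a, b))"
  unfolding UNIV_Times_UNIV[symmetric] sum.cartesian_product by (simp add: case_prod_unfold)

lemma nn_integral_measure_pmf_finite_type:
  fixes M :: "'a::finite pmf"
  assumes "\<And>c. 0 \<le> f c"
  shows "(\<integral>\<^sup>+c. ennreal (f c) \<partial>measure_pmf M) = ennreal (\<Sum>c\<in>UNIV. pmf M c * f c)"
  using assms
  by (subst nn_integral_measure_pmf_support[of UNIV])
     (auto simp: sum_ennreal[symmetric] ennreal_mult'' mult.commute intro: sum.cong)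

lemma sum_pmf_sq_dev_gossip_step_acts:
  fixes x :: "real^'n::finite"
  assumes "set_pmf q \<subseteq> sym_acts" "pmf (map_pmf fst q) Att = \<alpha>"
  shows "(\<Sum>e\<in>UNIV. pmf q e * sq_dev (gossip_step t s (p, e) x))
           = sq_dev x - \<alpha> * (2 * t * (1 - t) * (x$fst p - x$snd p)^2)"
proof -
  let ?D = "2 * t * (1 - t) * (x$fst p - x$snd p)^2"
  have "pmf q e * sq_dev (gossip_step t s (p, e) x)
      = pmf q e * sq_dev x - (if fst e = Att then pmf q e else 0) * ?D" for e
  proof (cases "e \<in> set_pmf q")
    case True
    then have "sq_dev (gossip_step t s (p, e) x) = sq_dev x - (if fst e = Att then ?D else 0)"
      using sq_dev_gossip_step[of "(p, e)" t s x] assms(1) by auto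
    then show ?thesis
      by (cases "fst e = Att") (simp_all add: right_diff_distrib)
  next
    case False
    then show ?thesis
      by (simp add: set_pmf_eq)
  qed
  moreover have "(\<Sum>e\<in>UNIV. if fst e = Att then pmf q e else 0) = \<alpha>"
  proof -
    have "\<alpha> = measure q (fst -` {Att})"
      using assms(2) by (simp add: pmf_map)
    also have "\<dots> = (\<Sum>e\<in>{e. fst e = Att}. pmf q e)"
      by (simp add: measure_measure_pmf_finite vimage_def)
    finally show ?thesis
      by (simp add: sum.inter_filter[symmetric])
  qed
  ultimately show ?thesis
    by (simp add: sum_subtractf sum_distrib_right[symmetric] sum_pmf_eq_1)
qed

lemma sum_pmf_sq_dev_gossip_step:
  fixes A :: "'n::finite \<Rightarrow> 'n \<Rightarrow> real" and x :: "real^'n"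
  assumes sel: "\<forall>i j. pmf sel (i, j) = A i j / real CARD('n)"
    and q: "set_pmf q \<subseteq> sym_acts" "pmf (map_pmf fst q) Att = \<alpha>"
  shows "(\<Sum>c\<in>UNIV. pmf (pair_pmf sel q) c * sq_dev (gossip_step t s c x))
       = sq_dev x - 2 * t * (1 - t) * \<alpha> / real CARD('n) * dirichlet_form A x"
proof -
  have "(\<Sum>c\<in>UNIV. pmf (pair_pmf sel q) c * sq_dev (gossip_step t s c x))
      = (\<Sum>p\<in>UNIV. pmf sel p * (\<Sum>e\<in>UNIV. pmf q e * sq_dev (gossip_step t s (p, e) x)))"
    by (subst sum_UNIV_pair) (simp add: pmf_pair sum_distrib_left mult.assoc)
  also have "\<dots> = (\<Sum>p\<in>UNIV. pmf sel p * (sq_dev x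
                     - \<alpha> * (2 * t * (1 - t) * (x$fst p - x$snd p)^2)))"
    by (simp add: sum_pmf_sq_dev_gossip_step_acts[OF q])
  also have "\<dots> = (\<Sum>p\<in>UNIV. pmf sel p) * sq_dev x
                     - \<alpha> * (\<Sum>p\<in>UNIV. pmf sel p * (2 * t * (1 - t) * (x$fst p - x$snd p)^2))"
    by (simp add: right_diff_distrib sum_subtractf sum_distrib_left sum_distrib_right mult_ac)
  also have "(\<Sum>p\<in>UNIV. pmf sel p * (2 * t * (1 - t) * (x$fst p - x$snd p)^2))
      = 2 * t * (1 - t) / real CARD('n) * dirichlet_form A x"
    by (subst sum_UNIV_pair) (simp add: sel dirichlet_form_def sum_distrib_left field_simps)
  finally show ?thesis
    by (simp add: sum_pmf_eq_1 algebra_simps)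
qed

lemma nn_integral_sq_dev_gossip_step_le:
  fixes A :: "'n::finite \<Rightarrow> 'n \<Rightarrow> real" and x :: "real^'n"
  assumes sel: "\<forall>i j. pmf sel (i, j) = A i j / real CARD('n)"
    and q: "set_pmf q \<subseteq> sym_acts" "pmf (map_pmf fst q) Att = \<alpha>" "0 \<le> \<alpha>"
    and c: "\<And>x. c * sq_dev x \<le> dirichlet_form A x"
    and b: "0 \<le> b" "b \<le> 2 * \<alpha> * c / real CARD('n)"
    and t: "0 \<le> t" "t \<le> 1"
  shows "(\<integral>\<^sup>+e. ennreal (sq_dev (gossip_step t s e x)) \<partial>measure_pmf (pair_pmf sel q))
           \<le> ennreal ((1 - b * (t * (1 - t))) * sq_dev x)"
proof -
  let ?w = "t * (1 - t) * \<alpha> / real CARD('n)"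
  have w_nonneg: "0 \<le> ?w"
    using t q(3) by simp
  have "b * (t * (1 - t)) * sq_dev x \<le> 2 * \<alpha> * c / real CARD('n) * (t * (1 - t)) * sq_dev x"
    using b t sq_dev_nonneg[of x] by (intro mult_right_mono) auto
  also have "\<dots> = 2 * ?w * (c * sq_dev x)"
    by (simp add: field_simps)
  also have "\<dots> \<le> 2 * ?w * dirichlet_form A x"
    using c w_nonneg by (intro mult_left_mono) auto
  finally have "sq_dev x - 2 * t * (1 - t) * \<alpha> / real CARD('n) * dirichlet_form A x
      \<le> (1 - b * (t * (1 - t))) * sq_dev x"
    by (simp add: algebra_simps)
  then show ?thesis
    by (simp add: nn_integral_measure_pmf_finite_type sq_dev_nonneg
        sum_pmf_sq_dev_gossip_step[OF sel q(1,2)] ennreal_leI)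
qed

section \<open>Expected decrease along the random path\<close>

text \<open>Recursing on the head of the stream, rather than on the time index as \<open>traj\<close> does,
  matches the disintegration of the stream space into its first letter and the rest.\<close>

fun gossip_run :: "(nat \<Rightarrow> real) \<Rightarrow> (nat \<Rightarrow> real) \<Rightarrow> nat \<Rightarrow> real^'n \<Rightarrow> nat \<Rightarrow>
                   (('n::finite \<times> 'n) \<times> (act \<times> act)) stream \<Rightarrow> real^'n" where
  "gossip_run T S t x 0 \<omega> = x"
| "gossip_run T S t x (Suc n) \<omega> =
     gossip_run T S (Suc t) (gossip_step (T t) (S t) (shd \<omega>) x) n (stl \<omega>)"

lemma gossip_run_Suc':
  "gossip_run T S t x (Suc n) \<omega> = gossip_step (T (t + n)) (S (t + n)) (\<omega> !! n) (gossip_run T S t x n \<omega>)"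
  by (induction n arbitrary: t x \<omega>) simp_all

lemma traj_eq_gossip_run: "traj T S k0 x0 \<omega> (k0 + n) = gossip_run T S k0 x0 n (sdrop k0 \<omega>)"
  by (induction n) (simp_all add: traj_before_start gossip_run_Suc' sdrop_snth del: gossip_run.simps(2))

text \<open>The run depends on finitely many letters of a stream over a finite alphabet, so it has
  countably many values and no measurability of \<open>f\<close> is needed.\<close>

lemma measurable_gossip_run:
  fixes f :: "real^'n::finite \<Rightarrow> 'b::topological_space"
  shows "(\<lambda>\<omega>. f (gossip_run T S t x n \<omega>)) \<in> borel_measurable (stream_space (measure_pmf M))"
proof (induction n arbitrary: t x)
  case 0
  then show ?case
    by simp
next
  case (Suc n)
  have shd: "shd \<in> measurable (stream_space (measure_pmf M)) (count_space UNIV)"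
    using measurable_shd[of "measure_pmf M"] by simp
  have "(\<lambda>\<omega>. (\<lambda>c \<omega>. f (gossip_run T S (Suc t) (gossip_step (T t) (S t) c x) n (stl \<omega>))) (shd \<omega>) \<omega>)
        \<in> borel_measurable (stream_space (measure_pmf M))"
    by (rule measurable_compose_countable'[OF _ shd])
       (auto intro: measurable_compose[OF measurable_stl Suc.IH])
  then show ?case
    by simp
qed

lemma measurable_traj:
  fixes f :: "real^'n::finite \<Rightarrow> 'b::topological_space"
  shows "(\<lambda>\<omega>. f (traj T S k0 x0 \<omega> k)) \<in> borel_measurable (stream_space (measure_pmf M))"
proof (cases "k \<le> k0")
  case True
  then show ?thesis
    by (simp add: traj_before_start)
next
  case False
  then have "traj T S k0 x0 \<omega> k = gossip_run T S k0 x0 (k - k0) (sdrop k0 \<omega>)" for \<omega>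
    using traj_eq_gossip_run[of T S k0 x0 \<omega> "k - k0"] by simp
  then show ?thesis
    using measurable_compose[OF measurable_sdrop measurable_gossip_run[where f = f]] by simp
qed

lemma (in prob_space) nn_integral_stream_space_sdrop:
  assumes "f \<in> borel_measurable (stream_space M)"
  shows "(\<integral>\<^sup>+\<omega>. f (sdrop k \<omega>) \<partial>stream_space M) = (\<integral>\<^sup>+\<omega>. f \<omega> \<partial>stream_space M)"
proof (induction k)
  case 0
  then show ?case
    by simp
next
  case (Suc k)
  have [measurable]: "f \<in> borel_measurable (stream_space M)"
    by (fact assms)
  have "(\<integral>\<^sup>+\<omega>. f (sdrop (Suc k) \<omega>) \<partial>stream_space M)
      = (\<integral>\<^sup>+c. (\<integral>\<^sup>+\<omega>. f (sdrop k (stl (c ## \<omega>))) \<partial>stream_space M) \<partial>M)"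
    by (simp add: nn_integral_stream_space[of "\<lambda>\<omega>. f (sdrop k (stl \<omega>))"])
  also have "\<dots> = (\<integral>\<^sup>+\<omega>. f \<omega> \<partial>stream_space M)"
    using Suc by (simp add: emeasure_space_1)
  finally show ?case .
qed

lemma nn_integral_sq_dev_gossip_run_le:
  fixes M :: "(('n::finite \<times> 'n) \<times> (act \<times> act)) pmf" and y :: "nat \<Rightarrow> real"
  assumes step: "\<And>t (x::real^'n). (\<integral>\<^sup>+c. ennreal (sq_dev (gossip_step (T t) (S t) c x)) \<partial>measure_pmf M)
                                     \<le> ennreal ((1 - y t) * sq_dev x)"
    and y_le_1: "\<And>t. y t \<le> 1"
  shows "(\<integral>\<^sup>+\<omega>. ennreal (sq_dev (gossip_run T S t x n \<omega>)) \<partial>stream_space (measure_pmf M))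
           \<le> ennreal ((\<Prod>j<n. 1 - y (t + j)) * sq_dev x)"
proof (induction n arbitrary: t x)
  case 0
  interpret prob_space "stream_space (measure_pmf M)"
    by (rule prob_space.prob_space_stream_space[OF prob_space_measure_pmf])
  show ?case
    by (simp add: emeasure_space_1)
next
  case (Suc n)
  define P where "P = (\<Prod>j<n. 1 - y (Suc t + j))"
  have P_nonneg: "0 \<le> P"
    unfolding P_def using y_le_1 by (simp add: prod_nonneg)
  have "(\<integral>\<^sup>+\<omega>. ennreal (sq_dev (gossip_run T S t x (Suc n) \<omega>)) \<partial>stream_space (measure_pmf M))
     = (\<integral>\<^sup>+c. (\<integral>\<^sup>+\<omega>. ennreal (sq_dev (gossip_run T S t x (Suc n) (c ## \<omega>)))
                     \<partial>stream_space (measure_pmf M)) \<partial>measure_pmf M)"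
    by (rule prob_space.nn_integral_stream_space[OF prob_space_measure_pmf measurable_gossip_run])
  also have "\<dots> = (\<integral>\<^sup>+c. (\<integral>\<^sup>+\<omega>. ennreal (sq_dev (gossip_run T S (Suc t) (gossip_step (T t) (S t) c x) n \<omega>))
                     \<partial>stream_space (measure_pmf M)) \<partial>measure_pmf M)"
    by simp
  also have "\<dots> \<le> (\<integral>\<^sup>+c. ennreal (P * sq_dev (gossip_step (T t) (S t) c x)) \<partial>measure_pmf M)"
    unfolding P_def by (intro nn_integral_mono Suc.IH)
  also have "\<dots> = ennreal P * (\<integral>\<^sup>+c. ennreal (sq_dev (gossip_step (T t) (S t) c x)) \<partial>measure_pmf M)"
    by (simp add: ennreal_mult P_nonneg sq_dev_nonneg nn_integral_cmult)
  also have "\<dots> \<le> ennreal P * ennreal ((1 - y t) * sq_dev x)"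
    by (intro mult_left_mono step) simp
  also have "\<dots> = ennreal ((\<Prod>j<Suc n. 1 - y (t + j)) * sq_dev x)"
    using P_nonneg y_le_1[of t] sq_dev_nonneg[of x]
    by (simp add: P_def prod.lessThan_Suc_shift ennreal_mult[symmetric] mult_ac del: prod.lessThan_Suc)
  finally show ?case .
qed

lemma nn_integral_sq_dev_traj_le:
  fixes M :: "(('n::finite \<times> 'n) \<times> (act \<times> act)) pmf" and y :: "nat \<Rightarrow> real"
  assumes step: "\<And>t (x::real^'n). (\<integral>\<^sup>+c. ennreal (sq_dev (gossip_step (T t) (S t) c x)) \<partial>measure_pmf M)
                                     \<le> ennreal ((1 - y t) * sq_dev x)"
    and y_le_1: "\<And>t. y t \<le> 1"
  shows "(\<integral>\<^sup>+\<omega>. ennreal (sq_dev (traj T S k0 x0 \<omega> (k0 + k))) \<partial>stream_space (measure_pmf M))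
           \<le> ennreal ((\<Prod>j<k. 1 - y (k0 + j)) * sq_dev x0)"
proof -
  have "(\<integral>\<^sup>+\<omega>. ennreal (sq_dev (traj T S k0 x0 \<omega> (k0 + k))) \<partial>stream_space (measure_pmf M))
      = (\<integral>\<^sup>+\<omega>. ennreal (sq_dev (gossip_run T S k0 x0 k \<omega>)) \<partial>stream_space (measure_pmf M))"
    unfolding traj_eq_gossip_run
    by (rule prob_space.nn_integral_stream_space_sdrop
        [OF prob_space_measure_pmf measurable_gossip_run[where f = "\<lambda>x. ennreal (sq_dev x)"]])
  also have "\<dots> \<le> ennreal ((\<Prod>j<k. 1 - y (k0 + j)) * sq_dev x0)"
    by (rule nn_integral_sq_dev_gossip_run_le[OF step y_le_1])
  finally show ?thesis .
qed

text \<open>\<open>V\<close> decreases along every path, so its infimum is the almost sure limit; the expected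
  infimum is below every \<open>E V(k)\<close>, which tends to \<open>0\<close>.\<close>

lemma AE_INF_sq_dev_traj_eq_0:
  fixes M :: "(('n::finite \<times> 'n) \<times> (act \<times> act)) pmf" and y :: "nat \<Rightarrow> real"
  assumes step: "\<And>t (x::real^'n). (\<integral>\<^sup>+c. ennreal (sq_dev (gossip_step (T t) (S t) c x)) \<partial>measure_pmf M)
                                     \<le> ennreal ((1 - y t) * sq_dev x)"
    and y: "\<And>t. 0 \<le> y t" "\<And>t. y t \<le> 1" and divergent: "\<not> summable y"
  shows "AE \<omega> in stream_space (measure_pmf M). (INF k. ennreal (sq_dev (traj T S k0 x0 \<omega> k))) = 0"
proof -
  let ?SM = "stream_space (measure_pmf M)"
  define u where "u \<omega> = (INF k. ennreal (sq_dev (traj T S k0 x0 \<omega> k)))" for \<omega>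
  have "\<not> summable (\<lambda>j. y (j + k0))"
    using divergent by simp
  then have "(\<lambda>k. \<Prod>j<k. 1 - y (k0 + j)) \<longlonglongrightarrow> 0"
    using y by (intro prod_one_minus_LIMSEQ_0) (simp_all add: add.commute)
  then have "(\<lambda>k. ennreal ((\<Prod>j<k. 1 - y (k0 + j)) * sq_dev x0)) \<longlonglongrightarrow> ennreal (0 * sq_dev x0)"
    by (intro tendsto_ennrealI tendsto_mult_right)
  moreover have "(\<integral>\<^sup>+\<omega>. u \<omega> \<partial>?SM) \<le> ennreal ((\<Prod>j<k. 1 - y (k0 + j)) * sq_dev x0)" for k
    using nn_integral_sq_dev_traj_le[OF step y(2), where k = k] unfolding u_def
    by (meson INF_lower UNIV_I nn_integral_mono order_trans)
  ultimately have "(\<integral>\<^sup>+\<omega>. u \<omega> \<partial>?SM) = 0"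
    using LIMSEQ_le_const[of _ 0 "\<integral>\<^sup>+\<omega>. u \<omega> \<partial>?SM"] by fastforce
  moreover have "u \<in> borel_measurable ?SM"
    unfolding u_def by (intro borel_measurable_INF measurable_traj) simp
  ultimately have "AE \<omega> in ?SM. u \<omega> = 0"
    by (simp add: nn_integral_0_iff_AE)
  then show ?thesis
    by (simp add: u_def)
qed

section \<open>Almost sure consensus\<close>

lemma AE_stream_sym_acts:
  assumes "set_pmf q \<subseteq> sym_acts"
  shows "AE \<omega> in stream_space (measure_pmf (pair_pmf sel q)). \<forall>k. snd (\<omega> !! k) \<in> sym_acts"
proof -
  have "AE \<omega> in stream_space (measure_pmf (pair_pmf sel q)). stream_all (\<lambda>c. snd c \<in> sym_acts) \<omega>"
    by (rule prob_space.AE_stream_all[OF prob_space_measure_pmf])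
       (use assms in \<open>auto simp: AE_measure_pmf_iff\<close>)
  then show ?thesis
    by (simp add: stream_all_def sset_range)
qed

lemma AE_AE_limsup_spread_traj_neq_0:
  assumes "CARD('n::finite) \<ge> 2" and q: "set_pmf q \<subseteq> sym_acts"
    and T01: "\<And>k. 0 \<le> T k" "\<And>k. T k \<le> 1" and summable: "summable (\<lambda>k. T k * (1 - T k))"
    and small: "\<And>j. j \<ge> k0 \<Longrightarrow> T j * (1 - T j) \<le> 1/8"
  shows "AE x0 in (lborel :: (real^'n) measure). AE \<omega> in stream_space (measure_pmf (pair_pmf sel q)).
           limsup (\<lambda>k. ereal (spread (traj T S k0 x0 \<omega> k))) \<noteq> 0"
  using AE_sq_dev_pos[OF assms(1)]
proof eventually_elim
  case (elim x0)
  show ?case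
    using AE_stream_sym_acts[OF q]
  proof eventually_elim
    case (elim \<omega>)
    then show ?case
      using limsup_spread_traj_neq_0[where T = T] T01 summable small \<open>0 < sq_dev x0\<close>
      by blast
  qed
qed

lemma limsup_spread_traj_eq_0:
  assumes acts: "\<And>k. snd (\<omega> !! k) \<in> sym_acts" and T01: "\<And>k. 0 \<le> T k" "\<And>k. T k \<le> 1"
    and INF_0: "(INF k. ennreal (sq_dev (traj T S k0 x0 \<omega> k))) = 0"
  shows "limsup (\<lambda>k. ereal (spread (traj T S k0 x0 \<omega> k))) = 0"
proof -
  let ?v = "\<lambda>k. sq_dev (traj T S k0 x0 \<omega> k)"
  have "decseq (\<lambda>k. ennreal (?v k))"
    by (intro decseq_SucI ennreal_leI sq_dev_traj_Suc_le[OF acts T01])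
  then have "(\<lambda>k. ennreal (?v k)) \<longlonglongrightarrow> 0"
    using INF_0 by (metis LIMSEQ_INF)
  then have v_lim: "?v \<longlonglongrightarrow> 0"
    by (simp add: ennreal_tendsto_0_iff sq_dev_nonneg)
  have sqrt_lim: "(\<lambda>k. sqrt (2 * ?v k)) \<longlonglongrightarrow> 0"
    using tendsto_real_sqrt[OF tendsto_mult[OF tendsto_const[of 2] v_lim]] by simp
  have "(\<lambda>k. spread (traj T S k0 x0 \<omega> k)) \<longlonglongrightarrow> 0"
    by (rule tendsto_sandwich[OF _ _ tendsto_const sqrt_lim])
       (simp_all add: spread_nonneg real_le_rsqrt spread_sq_le_sq_dev)
  then have "limsup (\<lambda>k. ereal (spread (traj T S k0 x0 \<omega> k))) = ereal 0"
    by (intro lim_imp_Limsup tendsto_ereal) simp_all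
  then show ?thesis
    by (simp add: zero_ereal_def)
qed

lemma AE_limsup_spread_traj_eq_0:
  fixes A :: "'n::finite \<Rightarrow> 'n \<Rightarrow> real" and x0 :: "real^'n"
  assumes nonneg: "\<And>i j. 0 \<le> A i j" and conn: "weakly_connected A"
    and sel: "\<forall>i j. pmf sel (i, j) = A i j / real CARD('n)"
    and q: "set_pmf q \<subseteq> sym_acts" "pmf (map_pmf fst q) Att = \<alpha>" "0 < \<alpha>"
    and T01: "\<And>k. 0 \<le> T k" "\<And>k. T k \<le> 1"
    and divergent: "\<not> summable (\<lambda>k. T k * (1 - T k))"
  shows "AE \<omega> in stream_space (measure_pmf (pair_pmf sel q)).
           limsup (\<lambda>k. ereal (spread (traj T S k0 x0 \<omega> k))) = 0"
proof -
  obtain c where c: "c > 0" "\<And>x. c * sq_dev x \<le> dirichlet_form A x"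
    using sq_dev_le_dirichlet_form[OF nonneg conn] by blast
  define b where "b = min 1 (2 * \<alpha> * c / real CARD('n))"
  define y where "y k = b * (T k * (1 - T k))" for k
  have "0 < b"
    unfolding b_def using q(3) c(1) by simp
  then have y_divergent: "\<not> summable y"
    using divergent by (simp add: y_def[abs_def] summable_cmult_iff)
  have y_bounds: "0 \<le> y k" "y k \<le> 1" for k
    using T01[of k] mult_mono[of b 1 "T k * (1 - T k)" 1] q(3) c(1)
    by (auto simp: y_def b_def mult_le_one)
  have step: "(\<integral>\<^sup>+e. ennreal (sq_dev (gossip_step (T t) (S t) e x)) \<partial>measure_pmf (pair_pmf sel q))
                \<le> ennreal ((1 - y t) * sq_dev x)" for t x
    unfolding y_def
    by (rule nn_integral_sq_dev_gossip_step_le[OF sel q(1,2) _ c(2)])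
       (use q(3) c(1) T01 in \<open>auto simp: b_def\<close>)
  have "AE \<omega> in stream_space (measure_pmf (pair_pmf sel q)).
          (INF k. ennreal (sq_dev (traj T S k0 x0 \<omega> k))) = 0"
    by (rule AE_INF_sq_dev_traj_eq_0[OF step y_bounds y_divergent])
  with AE_stream_sym_acts[OF q(1)] show ?thesis
    by eventually_elim (simp add: limsup_spread_traj_eq_0 T01)
qed

theorem theorem3:
  fixes A :: "'n::finite \<Rightarrow> 'n \<Rightarrow> real"
    and sel :: "('n \<times> 'n) pmf"
    and q :: "(act \<times> act) pmf"
    and \<alpha> \<beta> \<gamma> :: real
    and T S :: "nat \<Rightarrow> real"
  assumes n3: "CARD('n) \<ge> 3"
    and A_nonneg: "\<forall>i j. A i j \<ge> 0"
    and A_stoch: "\<forall>i. (\<Sum>j\<in>UNIV. A i j) = 1"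
    and sel_def: "\<forall>i j. pmf sel (i, j) = A i j / real CARD('n)"
    and marg_i: "pmf (map_pmf fst q) Att = \<alpha>" "pmf (map_pmf fst q) Neu = \<beta>"
                "pmf (map_pmf fst q) Rep = \<gamma>"
    and marg_j: "pmf (map_pmf snd q) Att = \<alpha>" "pmf (map_pmf snd q) Neu = \<beta>"
                "pmf (map_pmf snd q) Rep = \<gamma>"
    and alpha_pos: "\<alpha> > 0"
    and T_range: "\<forall>k. 0 < T k \<and> T k \<le> 1"
    and S_pos: "\<forall>k. S k > 0"
    and A1: "weakly_connected A"
    and A2: "\<gamma> = 0"
    and A3: "\<forall>e\<in>set_pmf q. fst e = Att \<longleftrightarrow> snd e = Att"
    and T_mono: "(\<forall>k. T (Suc k) \<le> T k) \<or> (\<forall>k. T (Suc k) \<ge> T k)"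
  shows "(summable (\<lambda>k. T k * (1 - T k)) \<longrightarrow>
            (\<exists>K0. \<forall>k0\<ge>K0. AE x0 in (lborel :: (real^'n) measure).
               AE \<omega> in stream_space (measure_pmf (pair_pmf sel q)).
                 limsup (\<lambda>k. ereal (spread (traj T S k0 x0 \<omega> k))) \<noteq> 0))
       \<and> (\<not> summable (\<lambda>k. T k * (1 - T k)) \<longrightarrow>
            (\<forall>k0 x0. AE \<omega> in stream_space (measure_pmf (pair_pmf sel q)).
                 limsup (\<lambda>k. ereal (spread (traj T S k0 x0 \<omega> k))) = 0))"
proof -
  have q_acts: "set_pmf q \<subseteq> sym_acts"
    using marg_i(3) marg_j(3) A2 A3 by (intro set_pmf_subset_sym_acts) auto
  have T01: "\<And>k. 0 \<le> T k" "\<And>k. T k \<le> 1"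
    using T_range by (auto simp: less_imp_le)
  show ?thesis
  proof (intro conjI impI)
    assume summable: "summable (\<lambda>k. T k * (1 - T k))"
    then obtain K0 where small: "\<And>j. j \<ge> K0 \<Longrightarrow> T j * (1 - T j) \<le> 1/8"
      using order_tendstoD(2)[OF summable_LIMSEQ_zero, of _ "1/8"]
      by (force simp: eventually_sequentially)
    have "AE x0 in lborel. AE \<omega> in stream_space (measure_pmf (pair_pmf sel q)).
            limsup (\<lambda>k. ereal (spread (traj T S k0 x0 \<omega> k))) \<noteq> 0" if "k0 \<ge> K0" for k0
      using n3 q_acts T01 summable small that by (intro AE_AE_limsup_spread_traj_neq_0) auto
    then show "\<exists>K0. \<forall>k0\<ge>K0. AE x0 in lborel. AE \<omega> in stream_space (measure_pmf (pair_pmf sel q)).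
                 limsup (\<lambda>k. ereal (spread (traj T S k0 x0 \<omega> k))) \<noteq> 0"
      by blast
  next
    assume "\<not> summable (\<lambda>k. T k * (1 - T k))"
    then show "\<forall>k0 x0. AE \<omega> in stream_space (measure_pmf (pair_pmf sel q)).
                 limsup (\<lambda>k. ereal (spread (traj T S k0 x0 \<omega> k))) = 0"
      by (intro allI AE_limsup_spread_traj_eq_0[OF _ A1 sel_def q_acts marg_i(1) alpha_pos])
         (use A_nonneg T01 in auto)
  qed
qed

end
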